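(* Let $f:\mathbb{R}^d\to\mathbb{R}$ be bounded below by $f^*$ and smooth with non-negative constants $L_1,\dots,L_d$, i.e. $f(y)\le f(x)+\langle\nabla f(x),y-x\rangle+\sum_{i=1}^d\frac{L_i}{2}(y_i-x_i)^2$ for all $x,y$, and let $\bar L:=\frac1d\sum_iL_i$. Let $M\ge1$ and $l=\lfloor\frac{M+1}{2}\rfloor$. Suppose that at every point $x$, each of $M$ nodes can draw an estimator $\hat g^m(x)$, $m=1,\dots,M$, these $M$ estimators being mutually independent and identically distributed, and each satisfying the SPB assumption with success probabilities $\rho_i(x)$. Consider parallel signSGD with majority vote: $x_{k+1}=x_k-\gamma_k\,\mathrm{sign}\big[\sum_{m=1}^M\mathrm{sign}\,\hat g^m(x_k)\big]$, with fresh draws at each iteration. (a) If $\gamma_k=\gamma_0/\sqrt{k+1}$, $\gamma_0>0$, then for every $K\ge2$, $$\min_{0\le k<K}\mathbb{E}\|\nabla f(x_k)\|_{\rho_M}\le\frac{f(x_0)-f^*}{\gamma_0\sqrt K}+\frac{3\gamma_0d\bar L}{2}\frac{\log K}{\sqrt K}.$$ (b) If $\gamma_k\equiv\gamma>0$, then $\frac1K\sum_{k=0}^{K-1}\mathbb{E}\|\nabla f(x_k)\|_{\rho_M}\le\frac{f(x_0)-f^*}{\gamma K}+\frac{\gamma d\bar L}{2}$.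
   Context: $g(x):=\nabla f(x)$; $\mathrm{sign}\,t=1,0,-1$ for $t>0,t=0,t<0$, entrywise on vectors. SPB: for each $i$ with $g_i(x)\ne0$, $\rho_i(x):=\mathrm{Prob}(\mathrm{sign}\,\hat g^m_i(x)=\mathrm{sign}\,g_i(x))>\tfrac12$. Regularized incomplete beta function: $I(p;a,b)=\frac{\int_0^pt^{a-1}(1-t)^{b-1}dt}{\int_0^1t^{a-1}(1-t)^{b-1}dt}$ for $a,b>0$, $p\in[0,1]$. The $\rho_M$-norm: $\|g(x)\|_{\rho_M}:=\sum_{i=1}^d\big(2I(\rho_i(x);l,l)-1\big)|g_i(x)|$ (terms with $g_i(x)=0$ vanish). $\log$ is natural logarithm. *)

theory Defs
  imports "HOL-Probability.Probability"
begin

definition vsign :: "real^'n \<Rightarrow> real^'n" where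
  "vsign v = (\<chi> i. sgn (v $ i))"

text \<open>Parallel signSGD with majority vote. The estimator of node m at iteration k
  at point x is G x (xi k m \<omega>); the noises xi k m are fresh iid draws.\<close>
primrec ssgd :: "(real^'d \<Rightarrow> 'b \<Rightarrow> real^'d) \<Rightarrow> (nat \<Rightarrow> real) \<Rightarrow> real^'d \<Rightarrow> nat
    \<Rightarrow> (nat \<Rightarrow> nat \<Rightarrow> 'a \<Rightarrow> 'b) \<Rightarrow> nat \<Rightarrow> 'a \<Rightarrow> real^'d" where
  "ssgd G \<gamma> x0 M xi 0 \<omega> = x0"
| "ssgd G \<gamma> x0 M xi (Suc k) \<omega> =
     (let x = ssgd G \<gamma> x0 M xi k \<omega>
      in x - \<gamma> k *\<^sub>R vsign (\<Sum>m<M. vsign (G x (xi k m \<omega>))))"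

definition inc_beta :: "real \<Rightarrow> real \<Rightarrow> real \<Rightarrow> real" where
  "inc_beta p a b =
     (LBINT t=0..p. t powr (a - 1) * (1 - t) powr (b - 1)) /
     (LBINT t=0..1. t powr (a - 1) * (1 - t) powr (b - 1))"

definition spb_rho :: "'b measure \<Rightarrow> (real^'d \<Rightarrow> 'b \<Rightarrow> real^'d) \<Rightarrow> (real^'d \<Rightarrow> real^'d)
    \<Rightarrow> real^'d \<Rightarrow> 'd \<Rightarrow> real" where
  "spb_rho Q G g x i = measure Q {w \<in> space Q. sgn (G x w $ i) = sgn (g x $ i)}"

definition rhoM_norm :: "nat \<Rightarrow> 'b measure \<Rightarrow> (real^'d \<Rightarrow> 'b \<Rightarrow> real^'d) \<Rightarrow> (real^'d \<Rightarrow> real^'d)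
    \<Rightarrow> real^'d \<Rightarrow> real" where
  "rhoM_norm M Q G g x =
     (\<Sum>i\<in>UNIV. (2 * inc_beta (spb_rho Q G g x i) (real ((M + 1) div 2)) (real ((M + 1) div 2)) - 1)
                 * \<bar>g x $ i\<bar>)"

end

theory Submission
  imports Defs "HOL-Analysis.Harmonic_Numbers"
begin

text \<open>
  Fix a coordinate i with g_i(x) \<noteq> 0. The M node signs agree with sgn g_i(x) independently with
  probability \<rho> = \<rho>_i(x), so the number of correct votes is Binomial(M, \<rho>) and the majority vote
  points along sgn g_i(x) with expected value E sgn(2 Bin(M, \<rho>) - M). Differentiating this
  Bernstein polynomial in \<rho> leaves a multiple of (\<rho>(1 - \<rho>))^(l-1), the symmetric beta density,
  so it equals 2 I(\<rho>; l, l) - 1. Summing over i gives E\<langle>g(x), vote\<rangle> \<ge> \<parallel>g(x)\<parallel>_\<rho>M, and the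
  smoothness inequality turns this into the descent estimate
  E f(x_(k+1)) \<le> E f(x_k) - \<gamma>_k E\<parallel>g(x_k)\<parallel>_\<rho>M + \<gamma>_k^2 (\<Sum>i L_i)/2.
  Telescoping against f \<ge> f* bounds \<Sum> \<gamma>_k E\<parallel>g(x_k)\<parallel>_\<rho>M; for \<gamma>_k = \<gamma>_0/\<surd>(k+1) one then uses
  \<Sum>\<gamma>_k \<ge> \<gamma>_0 \<surd>K and \<Sum>\<gamma>_k^2 = \<gamma>_0^2 H_K \<le> 3 \<gamma>_0^2 log K.
\<close>

text \<open>The library declares this rule raw, which does not lift it through compositions.\<close>
declare borel_measurable_nth[measurable]

section \<open>Expectations under the binomial law\<close>

text \<open>binomial_mean n p h = E h(X) for X ~ Binomial(n, p), by conditioning on the first trial.\<close>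
fun binomial_mean :: "nat \<Rightarrow> real \<Rightarrow> (nat \<Rightarrow> real) \<Rightarrow> real" where
  "binomial_mean 0 p h = h 0"
| "binomial_mean (Suc n) p h = p * binomial_mean n p (\<lambda>j. h (Suc j)) + (1 - p) * binomial_mean n p h"

declare binomial_mean.simps(2)[simp del]

lemma binomial_mean_linear:
  "binomial_mean n p (\<lambda>j. a * h1 j + b * h2 j) = a * binomial_mean n p h1 + b * binomial_mean n p h2"
  by (induction n arbitrary: h1 h2) (simp_all add: binomial_mean.simps(2) algebra_simps)

lemma binomial_mean_diff:
  "binomial_mean n p (\<lambda>j. h1 j - h2 j) = binomial_mean n p h1 - binomial_mean n p h2"
  using binomial_mean_linear[of n p 1 h1 "-1" h2] by simp

lemma binomial_mean_at_0: "binomial_mean n 0 h = h 0"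
  by (induction n arbitrary: h) (simp_all add: binomial_mean.simps(2))

lemma binomial_mean_at_1: "binomial_mean n 1 h = h n"
  by (induction n arbitrary: h) (simp_all add: binomial_mean.simps(2))

lemma abs_binomial_mean_le:
  assumes "p \<in> {0..1}" and "\<And>j. \<bar>h j\<bar> \<le> c"
  shows "\<bar>binomial_mean n p h\<bar> \<le> c"
  using assms(2)
proof (induction n arbitrary: h)
  case (Suc n)
  have "\<bar>p * binomial_mean n p (\<lambda>j. h (Suc j))\<bar> \<le> p * c"
    using Suc assms(1) by (simp add: abs_mult mult_left_mono)
  moreover have "\<bar>(1 - p) * binomial_mean n p h\<bar> \<le> (1 - p) * c"
    using Suc assms(1) by (simp add: abs_mult mult_left_mono)
  ultimately show ?case by (simp add: binomial_mean.simps(2)) argo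
qed simp

lemma binomial_mean_has_real_derivative:
  "((\<lambda>p. binomial_mean (Suc n) p h) has_real_derivative
     real (Suc n) * binomial_mean n p (\<lambda>j. h (Suc j) - h j)) (at p)"
proof (induction n arbitrary: h)
  case 0
  show ?case by (auto intro!: derivative_eq_intros simp: binomial_mean.simps(2) algebra_simps)
next
  case (Suc n)
  let ?B = "\<lambda>h. binomial_mean (Suc n) p h" and ?D = "\<lambda>h. binomial_mean n p (\<lambda>j. h (Suc j) - h j)"
  have "((\<lambda>p. p * binomial_mean (Suc n) p (\<lambda>j. h (Suc j)) + (1 - p) * binomial_mean (Suc n) p h)
      has_real_derivative
        (1 * ?B (\<lambda>j. h (Suc j)) + real (Suc n) * ?D (\<lambda>j. h (Suc j)) * p
         + ((0 - 1) * ?B h + real (Suc n) * ?D h * (1 - p)))) (at p)"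
    by (intro DERIV_add DERIV_mult DERIV_diff DERIV_const DERIV_ident Suc.IH)
  moreover have "1 * ?B (\<lambda>j. h (Suc j)) + real (Suc n) * ?D (\<lambda>j. h (Suc j)) * p
         + ((0 - 1) * ?B h + real (Suc n) * ?D h * (1 - p))
      = real (Suc (Suc n)) * ?B (\<lambda>j. h (Suc j) - h j)"
    using binomial_mean_diff[of "Suc n" p "\<lambda>j. h (Suc j)" h]
    by (simp add: binomial_mean.simps(2) algebra_simps)
  ultimately show ?case by (simp add: binomial_mean.simps(2))
qed

lemma continuous_on_binomial_mean: "continuous_on UNIV (\<lambda>p. binomial_mean n p h)"
proof (cases n)
  case (Suc m)
  show ?thesis unfolding Suc
    by (rule continuous_at_imp_continuous_on) (use DERIV_isCont[OF binomial_mean_has_real_derivative] in auto)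
qed simp

lemma binomial_mean_indicator:
  "binomial_mean n p (\<lambda>j. if j = c then 1 else 0) = real (n choose c) * p ^ c * (1 - p) ^ (n - c)"
proof (induction n arbitrary: c)
  case (Suc n)
  show ?case
  proof (cases c)
    case 0
    then show ?thesis using Suc[of 0] binomial_mean_linear[of n p 0 _ 0 "\<lambda>_. 0"]
      by (simp add: binomial_mean.simps(2))
  next
    case (Suc c')
    have "(\<lambda>j. if Suc j = c then 1 else (0::real)) = (\<lambda>j. if j = c' then 1 else 0)"
      using Suc by auto
    then have "binomial_mean (Suc n) p (\<lambda>j. if j = c then 1 else 0)
       = p * (real (n choose c') * p ^ c' * (1 - p) ^ (n - c'))
         + (1 - p) * (real (n choose c) * p ^ c * (1 - p) ^ (n - c))"
      using Suc.IH[of c'] Suc.IH[of c] by (simp add: binomial_mean.simps(2))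
    also have "\<dots> = real (Suc n choose c) * p ^ c * (1 - p) ^ (Suc n - c)"
    proof (cases "c' < n")
      case True
      then have "n - c' = Suc (n - c)" using Suc by simp
      then show ?thesis using Suc by (simp add: algebra_simps)
    next
      case False
      then show ?thesis using Suc by (simp add: algebra_simps)
    qed
    finally show ?thesis .
  qed
qed simp

section \<open>Majority vote and the regularized incomplete beta function\<close>

text \<open>The majority vote of n voters of which j are correct: 1, 0 (tie) or -1.\<close>
definition majority_sign :: "nat \<Rightarrow> nat \<Rightarrow> real" where
  "majority_sign n j = sgn (2 * real j - real n)"

lemma abs_majority_sign_le: "\<bar>majority_sign n j\<bar> \<le> 1"
  by (simp add: majority_sign_def abs_sgn_eq)

lemma majority_sign_Suc_diff:
  "majority_sign (Suc m) (Suc j) - majority_sign (Suc m) j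
     = (if j = Suc m div 2 then 1 else 0) + (if j = m div 2 then 1 else 0)"
proof -
  have "j = m div 2 \<longleftrightarrow> 2 * j = m \<or> 2 * j + 1 = m" "j = Suc m div 2 \<longleftrightarrow> 2 * j = m \<or> 2 * j = m + 1"
    by presburger+
  moreover consider "2 * j + 1 < m" | "2 * j + 1 = m" | "2 * j = m" | "2 * j = m + 1" | "2 * j > m + 1"
    by linarith
  ultimately show ?thesis
    by cases (auto simp: majority_sign_def sgn_real_def)
qed

text \<open>Adjacent binomial weights around the middle combine into the symmetric beta kernel.\<close>
lemma middle_binomial_weights:
  obtains c :: real where "c > 0"
    "\<And>x. real (m choose (Suc m div 2)) * x ^ (Suc m div 2) * (1 - x) ^ (m - Suc m div 2)
         + real (m choose (m div 2)) * x ^ (m div 2) * (1 - x) ^ (m - m div 2)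
       = c * (x * (1 - x)) ^ (m div 2)"
proof (cases "even m")
  case True
  then obtain t where m: "m = 2 * t" by blast
  show ?thesis
    by (rule that[of "2 * real (m choose t)"]) (simp_all add: m power_mult_distrib)
next
  case False
  then obtain t where m: "m = 2 * t + 1" using oddE by blast
  have "(m choose Suc t) = (m choose t)"
    using binomial_symmetric[of t m] m by simp
  moreover have "m - Suc t = t" "m - t = Suc t" "Suc m div 2 = Suc t" "m div 2 = t"
    using m by simp_all
  ultimately show ?thesis
    by (intro that[of "real (m choose t)"]) (unfold power_mult_distrib power_Suc, simp_all add: algebra_simps)
qed

lemma binomial_mean_majority_has_derivative:
  obtains c where "c > 0"
    "\<And>x. ((\<lambda>p. binomial_mean (Suc m) p (majority_sign (Suc m)))
           has_real_derivative c * (x * (1 - x)) ^ (m div 2)) (at x)"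
proof -
  obtain c where c: "c > 0" and w: "\<And>x. real (m choose (Suc m div 2)) * x ^ (Suc m div 2) * (1 - x) ^ (m - Suc m div 2)
         + real (m choose (m div 2)) * x ^ (m div 2) * (1 - x) ^ (m - m div 2)
       = c * (x * (1 - x)) ^ (m div 2)"
    using middle_binomial_weights by blast
  show ?thesis
  proof (rule that[of "real (Suc m) * c"])
    fix x
    have "binomial_mean m x (\<lambda>j. majority_sign (Suc m) (Suc j) - majority_sign (Suc m) j)
        = c * (x * (1 - x)) ^ (m div 2)"
      unfolding majority_sign_Suc_diff
      using binomial_mean_linear[of m x 1 "\<lambda>j. if j = Suc m div 2 then 1 else 0" 1] w[of x]
      by (simp add: binomial_mean_indicator)
    then show "((\<lambda>p. binomial_mean (Suc m) p (majority_sign (Suc m)))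
           has_real_derivative real (Suc m) * c * (x * (1 - x)) ^ (m div 2)) (at x)"
      using binomial_mean_has_real_derivative[of m "majority_sign (Suc m)" x] by (simp add: mult.assoc)
  qed (use c in simp)
qed

lemma inc_beta_symmetric_eq_majority:
  assumes n: "1 \<le> n" and p: "p \<in> {0..1}"
  shows "2 * inc_beta p (real ((n + 1) div 2)) (real ((n + 1) div 2)) - 1
       = binomial_mean n p (majority_sign n)"
proof -
  obtain m where m: "n = Suc m" using n by (cases n) auto
  let ?B = "\<lambda>p. binomial_mean n p (majority_sign n)"
  let ?l = "real ((n + 1) div 2)"
  obtain c where c: "c > 0"
    and D: "\<And>x. (?B has_real_derivative c * (x * (1 - x)) ^ (m div 2)) (at x)"
    using binomial_mean_majority_has_derivative[of m] unfolding m by blast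
  have l: "Suc n div 2 = Suc (m div 2)" unfolding m by simp
  have beta: "(LBINT x=0..q. x powr (?l - 1) * (1 - x) powr (?l - 1)) = (?B q - ?B 0) / c"
    if "0 \<le> q" "q \<le> 1" for q
  proof -
    have "(LBINT x=0..q. x powr (?l - 1) * (1 - x) powr (?l - 1)) = (LBINT x=0..q. (x * (1 - x)) ^ (m div 2))"
      by (rule interval_integral_cong)
        (use that in \<open>auto simp: einterval_iff l powr_realpow power_mult_distrib\<close>)
    also have "\<dots> = ?B q / c - ?B 0 / c"
    proof (subst zero_ereal_def, rule interval_integral_FTC_finite)
      show "continuous_on {min 0 q..max 0 q} (\<lambda>x. (x * (1 - x)) ^ (m div 2))"
        by (intro continuous_intros)
      fix x
      have "((\<lambda>p. ?B p / c) has_real_derivative (x * (1 - x)) ^ (m div 2)) (at x)"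
        using DERIV_cdivide[OF D[of x], of c] c by simp
      then show "((\<lambda>p. ?B p / c) has_vector_derivative (x * (1 - x)) ^ (m div 2))
          (at x within {min 0 q..max 0 q})"
        by (simp add: has_real_derivative_iff_has_vector_derivative has_vector_derivative_at_within)
    qed
    finally show ?thesis by (simp add: diff_divide_distrib)
  qed
  have B0: "?B 0 = -1" and B1: "?B 1 = 1"
    using n by (simp_all add: binomial_mean_at_0 binomial_mean_at_1 majority_sign_def)
  have "inc_beta p ?l ?l = ((?B p + 1) / c) / (2 / c)"
    unfolding inc_beta_def using beta[of p] beta[of 1] p B0 B1 by (simp add: one_ereal_def)
  then show ?thesis using c by simp
qed

lemma prob_space_integrable_bounded:
  fixes f :: "_ \<Rightarrow> real"
  assumes "prob_space M" "f \<in> borel_measurable M" "\<And>x. x \<in> space M \<Longrightarrow> \<bar>f x\<bar> \<le> B"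
  shows "integrable M f"
proof -
  interpret prob_space M by fact
  show ?thesis by (rule integrable_const_bound[where B=B]) (use assms in auto)
qed

lemma measurable_card_hits:
  assumes "finite J" "S \<in> sets Q"
  shows "(\<lambda>\<psi>. card {j\<in>J. \<psi> j \<in> S}) \<in> measurable (PiM J (\<lambda>_. Q)) (count_space UNIV)"
proof -
  have S: "Measurable.pred Q (\<lambda>y. y \<in> S)"
    using assms(2) by (simp add: pred_def sets.Int_space_eq2 Collect_conj_eq Int_commute[of _ S] Int_def[symmetric])
  have [measurable]: "Measurable.pred (PiM J (\<lambda>_. Q)) (\<lambda>\<psi>. \<psi> j \<in> S)" if "j \<in> J" for j
    using measurable_compose[OF measurable_component_singleton[OF that] S] by simp
  have "card {j\<in>J. \<psi> j \<in> S} = (\<Sum>j\<in>J. (if \<psi> j \<in> S then 1 else 0::nat))" for \<psi>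
    using assms(1) by (simp add: sum.If_cases Collect_conj_eq)
  then show ?thesis using assms(1) by simp
qed

lemma integrable_PiM_card_hits:
  assumes "prob_space Q" "S \<in> sets Q" "finite J"
  shows "integrable (PiM J (\<lambda>_. Q)) (\<lambda>\<psi>. h (card {j\<in>J. \<psi> j \<in> S}) :: real)"
proof (rule prob_space_integrable_bounded[where B="\<Sum>k\<le>card J. \<bar>h k\<bar>"])
  show "prob_space (PiM J (\<lambda>_. Q))" by (rule prob_space_PiM) (use assms in auto)
  show "(\<lambda>\<psi>. h (card {j\<in>J. \<psi> j \<in> S})) \<in> borel_measurable (PiM J (\<lambda>_. Q))"
    using measurable_compose[OF measurable_card_hits[OF assms(3,2)], of h borel] by simp
  have "card {j\<in>J. \<psi> j \<in> S} \<le> card J" for \<psi>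
    by (rule card_mono) (use assms in auto)
  then show "\<bar>h (card {j\<in>J. \<psi> j \<in> S})\<bar> \<le> (\<Sum>k\<le>card J. \<bar>h k\<bar>)" for \<psi>
    by (intro member_le_sum) auto
qed

lemma integral_PiM_card_hits:
  assumes Q: "prob_space Q" and S: "S \<in> sets Q" and J: "finite J"
  shows "(\<integral>\<psi>. h (card {j\<in>J. \<psi> j \<in> S}) \<partial>PiM J (\<lambda>_. Q)) = binomial_mean (card J) (measure Q S) h"
  using J
proof (induction J arbitrary: h rule: finite_induct)
  case empty
  show ?case by (simp add: PiM_empty)
next
  case (insert a J)
  interpret Q: prob_space Q by fact
  interpret PQ: product_sigma_finite "\<lambda>_. Q"
    by (simp add: product_sigma_finite_def Q.sigma_finite_measure_axioms)
  let ?\<rho> = "measure Q S" and ?hits = "\<lambda>J \<psi>. card {j\<in>J. \<psi> j \<in> S}"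
  have "integrable (PiM (insert a J) (\<lambda>_. Q)) (\<lambda>\<psi>. h (?hits (insert a J) \<psi>))"
    using insert(1) by (rule integrable_PiM_card_hits[OF Q S finite.insertI])
  then have "(\<integral>\<psi>. h (?hits (insert a J) \<psi>) \<partial>PiM (insert a J) (\<lambda>_. Q))
      = (\<integral>x. (\<integral>y. h (?hits (insert a J) (x(a := y))) \<partial>Q) \<partial>PiM J (\<lambda>_. Q))"
    by (rule PQ.product_integral_insert[OF insert(1,2)])
  also have "\<dots> = (\<integral>x. ?\<rho> * h (Suc (?hits J x)) + (1 - ?\<rho>) * h (?hits J x) \<partial>PiM J (\<lambda>_. Q))"
  proof (rule Bochner_Integration.integral_cong[OF refl])
    fix x
    have "?hits (insert a J) (x(a := y)) = (if y \<in> S then Suc (?hits J x) else ?hits J x)" for y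
    proof -
      have "{j\<in>insert a J. (x(a := y)) j \<in> S} = (if y \<in> S then insert a {j\<in>J. x j \<in> S} else {j\<in>J. x j \<in> S})"
        using insert(2) by auto
      then show ?thesis using insert(1,2) by auto
    qed
    then have "(\<integral>y. h (?hits (insert a J) (x(a := y))) \<partial>Q)
        = (\<integral>y. h (?hits J x) + (h (Suc (?hits J x)) - h (?hits J x)) * indicator S y \<partial>Q)"
      by (intro Bochner_Integration.integral_cong) (auto simp: indicator_def)
    also have "\<dots> = h (?hits J x) + (h (Suc (?hits J x)) - h (?hits J x)) * ?\<rho>"
      using S by (simp add: Q.prob_space Q.emeasure_finite less_top[symmetric])
    finally show "(\<integral>y. h (?hits (insert a J) (x(a := y))) \<partial>Q)
        = ?\<rho> * h (Suc (?hits J x)) + (1 - ?\<rho>) * h (?hits J x)"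
      by (simp add: algebra_simps)
  qed
  also have "\<dots> = binomial_mean (card J) ?\<rho> (\<lambda>k. ?\<rho> * h (Suc k) + (1 - ?\<rho>) * h k)"
    by (rule insert.IH)
  also have "\<dots> = binomial_mean (card (insert a J)) ?\<rho> h"
    using insert(1,2) by (simp add: binomial_mean_linear binomial_mean.simps(2))
  finally show ?case .
qed

section \<open>The majority vote is a descent direction in expectation\<close>

lemma borel_measurable_vec_componentwise:
  assumes "\<And>i. (\<lambda>x. F x $ i) \<in> borel_measurable M"
  shows "(F :: _ \<Rightarrow> real^'n) \<in> borel_measurable M"
proof (subst borel_measurable_euclidean_space, intro ballI)
  fix b :: "real^'n" assume "b \<in> Basis"
  then obtain i where b: "b = axis i 1" by (auto simp: Basis_vec_def)
  show "(\<lambda>x. F x \<bullet> b) \<in> borel_measurable M" unfolding b inner_axis using assms[of i] by simp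
qed

lemma borel_measurable_vsign[measurable]: "(vsign :: real^'n \<Rightarrow> real^'n) \<in> borel_measurable borel"
  by (rule borel_measurable_vec_componentwise) (simp add: vsign_def)

lemma abs_vsign_nth_le: "\<bar>vsign v $ i\<bar> \<le> 1"
  by (simp add: vsign_def sgn_real_def)

text \<open>Abstaining voters (a j = 0) are counted as wrong, which only weakens the bound.\<close>
lemma majority_sign_le_sgn_vote:
  fixes a :: "'j \<Rightarrow> real"
  assumes J: "finite J" and s: "s = 1 \<or> s = -1" and a: "\<And>j. j \<in> J \<Longrightarrow> a j \<in> {-1, 0, 1}"
  shows "majority_sign (card J) (card {j\<in>J. a j = s}) \<le> s * sgn (\<Sum>j\<in>J. a j)"
proof -
  have "2 * real (card {j\<in>J. a j = s}) - real (card J) = (\<Sum>j\<in>J. 2 * (if a j = s then 1 else 0) - 1)"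
    using J by (simp add: sum_subtractf sum_distrib_left[symmetric] sum.If_cases Collect_conj_eq)
  also have "\<dots> \<le> (\<Sum>j\<in>J. s * a j)"
    by (rule sum_mono) (use s a in fastforce)
  finally have "majority_sign (card J) (card {j\<in>J. a j = s}) \<le> sgn (\<Sum>j\<in>J. s * a j)"
    unfolding majority_sign_def by (auto simp: sgn_real_def)
  also have "\<dots> = s * sgn (\<Sum>j\<in>J. a j)"
    using s by (auto simp: sum_distrib_left[symmetric] sgn_mult)
  finally show ?thesis .
qed

lemma integrable_vote_nth:
  fixes H :: "'b \<Rightarrow> real^'n" and c :: real
  assumes "prob_space Q" "finite J" "H \<in> borel_measurable Q"
  shows "integrable (PiM J (\<lambda>_. Q)) (\<lambda>\<psi>. c * sgn (\<Sum>j\<in>J. sgn (H (\<psi> j) $ i)))"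
proof (rule prob_space_integrable_bounded[where B="\<bar>c\<bar>"])
  show "prob_space (PiM J (\<lambda>_. Q))" by (rule prob_space_PiM) (use assms in auto)
  have [measurable]: "(\<lambda>\<psi>. H (\<psi> j)) \<in> borel_measurable (PiM J (\<lambda>_. Q))" if "j \<in> J" for j
    using measurable_compose[OF measurable_component_singleton[OF that] assms(3)] by simp
  show "(\<lambda>\<psi>. c * sgn (\<Sum>j\<in>J. sgn (H (\<psi> j) $ i))) \<in> borel_measurable (PiM J (\<lambda>_. Q))"
    using assms(2) by measurable
qed (auto simp: abs_mult abs_sgn_eq)

lemma rhoM_weight_le_expected_vote_nth:
  fixes G :: "real^'d \<Rightarrow> 'b \<Rightarrow> real^'d" and g :: "real^'d \<Rightarrow> real^'d"
  assumes Q: "prob_space Q" and J: "finite J" "card J = M" and M: "1 \<le> M"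
    and Gm: "G x \<in> borel_measurable Q"
  shows "(2 * inc_beta (spb_rho Q G g x i) (real ((M + 1) div 2)) (real ((M + 1) div 2)) - 1) * \<bar>g x $ i\<bar>
    \<le> (\<integral>\<psi>. g x $ i * sgn (\<Sum>j\<in>J. sgn (G x (\<psi> j) $ i)) \<partial>PiM J (\<lambda>_. Q))"
proof (cases "g x $ i = 0")
  case False
  interpret Q: prob_space Q by fact
  let ?P = "PiM J (\<lambda>_. Q)"
  define s where "s = sgn (g x $ i)"
  have s: "s = 1 \<or> s = -1" using False by (auto simp: s_def sgn_real_def)
  define S where "S = {w \<in> space Q. sgn (G x w $ i) = s}"
  have S: "S \<in> sets Q" unfolding S_def using Gm by measurable
  let ?hits = "\<lambda>\<psi>. card {j\<in>J. \<psi> j \<in> S}"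
  have "2 * inc_beta (spb_rho Q G g x i) (real ((M + 1) div 2)) (real ((M + 1) div 2)) - 1
      = binomial_mean M (measure Q S) (majority_sign M)"
    unfolding S_def s_def spb_rho_def by (rule inc_beta_symmetric_eq_majority[OF M]) (simp add: Q.prob_le_1)
  also have "\<dots> = (\<integral>\<psi>. majority_sign M (?hits \<psi>) \<partial>?P)"
    using integral_PiM_card_hits[OF Q S J(1), of "majority_sign M"] J(2) by simp
  finally have "(2 * inc_beta (spb_rho Q G g x i) (real ((M + 1) div 2)) (real ((M + 1) div 2)) - 1)
        * \<bar>g x $ i\<bar> = (\<integral>\<psi>. \<bar>g x $ i\<bar> * majority_sign M (?hits \<psi>) \<partial>?P)"
    by simp
  also have "\<dots> \<le> (\<integral>\<psi>. g x $ i * sgn (\<Sum>j\<in>J. sgn (G x (\<psi> j) $ i)) \<partial>?P)"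
  proof (rule integral_mono[OF _ integrable_vote_nth[OF Q J(1) Gm]])
    show "integrable ?P (\<lambda>\<psi>. \<bar>g x $ i\<bar> * majority_sign M (?hits \<psi>))"
      using integrable_PiM_card_hits[OF Q S J(1), of "majority_sign M"] by simp
    fix \<psi> assume "\<psi> \<in> space ?P"
    then have "{j\<in>J. \<psi> j \<in> S} = {j\<in>J. sgn (G x (\<psi> j) $ i) = s}"
      by (auto simp: S_def space_PiM PiE_def Pi_def)
    moreover have "sgn (G x (\<psi> j) $ i) \<in> {-1, 0, 1}" for j
      by (auto simp: sgn_real_def)
    ultimately have "majority_sign M (?hits \<psi>) \<le> s * sgn (\<Sum>j\<in>J. sgn (G x (\<psi> j) $ i))"
      using majority_sign_le_sgn_vote[OF J(1) s] J(2) by simp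
    then have "\<bar>g x $ i\<bar> * majority_sign M (?hits \<psi>)
        \<le> \<bar>g x $ i\<bar> * (s * sgn (\<Sum>j\<in>J. sgn (G x (\<psi> j) $ i)))"
      by (simp add: mult_left_mono)
    also have "\<dots> = g x $ i * sgn (\<Sum>j\<in>J. sgn (G x (\<psi> j) $ i))"
      unfolding s_def mult.assoc[symmetric] abs_mult_sgn ..
    finally show "\<bar>g x $ i\<bar> * majority_sign M (?hits \<psi>) \<le> g x $ i * sgn (\<Sum>j\<in>J. sgn (G x (\<psi> j) $ i))" .
  qed
  finally show ?thesis .
qed simp

lemma rhoM_norm_le_expected_vote:
  fixes G :: "real^'d \<Rightarrow> 'b \<Rightarrow> real^'d" and g :: "real^'d \<Rightarrow> real^'d"
  assumes Q: "prob_space Q" and J: "finite J" "card J = M" and M: "1 \<le> M"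
    and Gm: "G x \<in> borel_measurable Q"
  shows "rhoM_norm M Q G g x \<le> (\<integral>\<psi>. g x \<bullet> vsign (\<Sum>j\<in>J. vsign (G x (\<psi> j))) \<partial>PiM J (\<lambda>_. Q))"
proof -
  have "(\<integral>\<psi>. g x \<bullet> vsign (\<Sum>j\<in>J. vsign (G x (\<psi> j))) \<partial>PiM J (\<lambda>_. Q))
      = (\<integral>\<psi>. (\<Sum>i\<in>UNIV. g x $ i * sgn (\<Sum>j\<in>J. sgn (G x (\<psi> j) $ i))) \<partial>PiM J (\<lambda>_. Q))"
    unfolding inner_vec_def vsign_def by (simp add: sum_component)
  also have "\<dots> = (\<Sum>i\<in>UNIV. (\<integral>\<psi>. g x $ i * sgn (\<Sum>j\<in>J. sgn (G x (\<psi> j) $ i)) \<partial>PiM J (\<lambda>_. Q)))"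
    by (rule Bochner_Integration.integral_sum) (use integrable_vote_nth[OF Q J(1) Gm] in auto)
  finally show ?thesis
    unfolding rhoM_norm_def
    using rhoM_weight_le_expected_vote_nth[where G=G and x=x, OF Q J M Gm] by (simp add: sum_mono)
qed

section \<open>Regularity of coordinatewise smooth functions\<close>

lemma has_derivative_imp_continuous_on_UNIV:
  assumes "\<And>x. (f has_derivative (\<lambda>h. g x \<bullet> h)) (at x)"
  shows "continuous_on UNIV f"
  by (rule continuous_at_imp_continuous_on) (use has_derivative_continuous[OF assms] in auto)

text \<open>The gradient is a pointwise limit of measurable difference quotients.\<close>
lemma borel_measurable_gradient:
  fixes f :: "real^'d \<Rightarrow> real"
  assumes grad: "\<And>x. (f has_derivative (\<lambda>h. g x \<bullet> h)) (at x)"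
  shows "g \<in> borel_measurable borel"
proof (rule borel_measurable_vec_componentwise)
  fix i :: 'd
  have [measurable]: "f \<in> borel_measurable borel"
    by (rule borel_measurable_continuous_onI[OF has_derivative_imp_continuous_on_UNIV[OF grad]])
  define u where "u n x = (f (x + inverse (real (Suc n)) *\<^sub>R axis i 1) - f x) / (inverse (real (Suc n)) - 0)" for n x
  show "(\<lambda>x. g x $ i) \<in> borel_measurable borel"
  proof (rule borel_measurable_LIMSEQ_real[where u=u])
    show "u n \<in> borel_measurable borel" for n unfolding u_def by measurable
  next
    fix x :: "real^'d"
    have "((\<lambda>t. x + t *\<^sub>R axis i 1) has_derivative (\<lambda>t. t *\<^sub>R axis i 1)) (at 0)"
      by (auto intro!: derivative_eq_intros)
    moreover have "(f has_derivative (\<lambda>h. g x \<bullet> h)) (at (x + 0 *\<^sub>R axis i 1))"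
      using grad by simp
    ultimately have "((\<lambda>t. f (x + t *\<^sub>R axis i 1)) has_derivative (\<lambda>t. g x \<bullet> (t *\<^sub>R axis i 1))) (at 0)"
      by (rule has_derivative_compose)
    moreover have "(\<lambda>t. g x \<bullet> (t *\<^sub>R axis i 1)) = (*) (g x $ i)"
      by (auto simp: inner_axis)
    ultimately have "((\<lambda>t. f (x + t *\<^sub>R axis i 1)) has_field_derivative g x $ i) (at 0)"
      unfolding has_field_derivative_def by simp
    then have T: "((\<lambda>t. (f (x + t *\<^sub>R axis i 1) - f (x + 0 *\<^sub>R axis i 1)) / (t - 0)) \<longlongrightarrow> g x $ i) (at 0)"
      unfolding has_field_derivative_iff .
    have "filterlim (\<lambda>n. inverse (real (Suc n))) (at 0) sequentially"
      unfolding filterlim_at using LIMSEQ_inverse_real_of_nat by auto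
    from filterlim_compose[OF T this] show "(\<lambda>n. u n x) \<longlonglongrightarrow> g x $ i"
      unfolding u_def by simp
  qed
qed

lemma continuous_bounded_on_box:
  fixes c :: "real^'d" and f :: "real^'d \<Rightarrow> real"
  assumes "continuous_on UNIV f"
  obtains B where "\<And>x. (\<forall>i. \<bar>x $ i - c $ i\<bar> \<le> R) \<Longrightarrow> \<bar>f x\<bar> \<le> B"
proof -
  let ?S = "cbox (c - vec R) (c + vec R)"
  have "compact (f ` ?S)"
    by (rule compact_continuous_image) (use assms continuous_on_subset in auto)
  then obtain B where B: "\<And>y. y \<in> f ` ?S \<Longrightarrow> norm y \<le> B"
    using compact_imp_bounded bounded_iff by metis
  show ?thesis
  proof (rule that)
    fix x :: "real^'d" assume x: "\<forall>i. \<bar>x $ i - c $ i\<bar> \<le> R"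
    have "(c - vec R) $ i \<le> x $ i \<and> x $ i \<le> (c + vec R) $ i" for i
      using x[rule_format, of i] by (simp add: abs_le_iff)
    then have "x \<in> ?S" by (simp add: mem_box_cart)
    then show "\<bar>f x\<bar> \<le> B" using B by auto
  qed
qed

lemma smooth_along_axis:
  fixes f :: "real^'d \<Rightarrow> real"
  assumes smooth: "\<And>x y. f y \<le> f x + g x \<bullet> (y - x) + (\<Sum>i\<in>UNIV. L i / 2 * (y $ i - x $ i)\<^sup>2)"
  shows "f (x + axis i t) \<le> f x + t * g x $ i + L i / 2 * t\<^sup>2"
proof -
  have "(\<Sum>j\<in>UNIV. L j / 2 * ((x + axis i t) $ j - x $ j)\<^sup>2) = (\<Sum>j\<in>UNIV. if j = i then L i / 2 * t\<^sup>2 else 0)"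
    by (rule sum.cong) (auto simp: axis_def)
  then show ?thesis using smooth[where x=x and y="x + axis i t"] by (simp add: inner_axis mult.commute)
qed

text \<open>Two axis steps of length 1 bound |g_i(x)| by the oscillation of f on the box of radius R + 1.\<close>
lemma gradient_bounded_on_box:
  fixes f :: "real^'d \<Rightarrow> real" and c :: "real^'d"
  assumes cont: "continuous_on UNIV f"
    and smooth: "\<And>x y. f y \<le> f x + g x \<bullet> (y - x) + (\<Sum>i\<in>UNIV. L i / 2 * (y $ i - x $ i)\<^sup>2)"
  obtains B where "\<And>x i. (\<forall>i. \<bar>x $ i - c $ i\<bar> \<le> R) \<Longrightarrow> \<bar>g x $ i\<bar> \<le> B"
proof -
  obtain Bf where Bf: "\<And>x. (\<forall>i. \<bar>x $ i - c $ i\<bar> \<le> R + 1) \<Longrightarrow> \<bar>f x\<bar> \<le> Bf"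
    using continuous_bounded_on_box[OF cont] by blast
  show ?thesis
  proof (rule that[of "2 * Bf + (\<Sum>i\<in>UNIV. \<bar>L i\<bar>) / 2"])
    fix x i assume x: "\<forall>i. \<bar>x $ i - c $ i\<bar> \<le> R"
    have near: "\<bar>f (x + axis i t)\<bar> \<le> Bf" if "\<bar>t\<bar> \<le> 1" for t
    proof (rule Bf, intro allI)
      show "\<bar>(x + axis i t) $ j - c $ j\<bar> \<le> R + 1" for j
        using x[rule_format, of j] that by (auto simp: axis_def)
    qed
    have "\<bar>f x\<bar> \<le> Bf"
    proof (rule Bf, intro allI)
      show "\<bar>x $ j - c $ j\<bar> \<le> R + 1" for j using x[rule_format, of j] by simp
    qed
    moreover have "\<bar>f (x + axis i 1)\<bar> \<le> Bf" "\<bar>f (x + axis i (-1))\<bar> \<le> Bf"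
      using near by simp_all
    moreover have "\<bar>L i\<bar> \<le> (\<Sum>i\<in>UNIV. \<bar>L i\<bar>)" by (rule member_le_sum) auto
    moreover have "f (x + axis i 1) \<le> f x + g x $ i + L i / 2"
      and "f (x + axis i (-1)) \<le> f x - g x $ i + L i / 2"
      using smooth_along_axis[OF smooth, of x i 1] smooth_along_axis[OF smooth, of x i "-1"] by simp_all
    ultimately show "\<bar>g x $ i\<bar> \<le> 2 * Bf + (\<Sum>i\<in>UNIV. \<bar>L i\<bar>) / 2"
      by linarith
  qed
qed

lemma integral_PiM_union_le:
  fixes F :: "('i \<Rightarrow> 'b) \<Rightarrow> real"
  assumes Q: "prob_space Q" and IJ: "I \<inter> J = {}" "finite I" "finite J"
    and F: "integrable (PiM (I \<union> J) (\<lambda>_. Q)) F" and H: "integrable (PiM I (\<lambda>_. Q)) H"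
    and slice: "\<And>x. (\<integral>y. F (merge I J (x, y)) \<partial>PiM J (\<lambda>_. Q)) \<le> H x"
  shows "(\<integral>\<psi>. F \<psi> \<partial>PiM (I \<union> J) (\<lambda>_. Q)) \<le> (\<integral>x. H x \<partial>PiM I (\<lambda>_. Q))"
proof -
  interpret Q: prob_space Q by (rule Q)
  interpret PS: product_sigma_finite "\<lambda>_. Q"
    by (simp add: product_sigma_finite_def Q.sigma_finite_measure_axioms)
  interpret P2: pair_sigma_finite "PiM I (\<lambda>_. Q)" "PiM J (\<lambda>_. Q)"
    using Q by (intro pair_sigma_finite.intro prob_space_imp_sigma_finite prob_space_PiM) auto
  have "integrable (PiM I (\<lambda>_. Q) \<Otimes>\<^sub>M PiM J (\<lambda>_. Q)) (\<lambda>xy. F (merge I J xy))"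
    by (rule integrable_distr[OF measurable_merge]) (simp add: PS.distr_merge[OF IJ] F)
  from P2.integrable_fst'[OF this]
  have "integrable (PiM I (\<lambda>_. Q)) (\<lambda>x. \<integral>y. F (merge I J (x, y)) \<partial>PiM J (\<lambda>_. Q))"
    by simp
  then have "(\<integral>x. (\<integral>y. F (merge I J (x, y)) \<partial>PiM J (\<lambda>_. Q)) \<partial>PiM I (\<lambda>_. Q)) \<le> (\<integral>x. H x \<partial>PiM I (\<lambda>_. Q))"
    using H slice by (rule integral_mono)
  then show ?thesis by (simp only: PS.product_integral_fold[OF IJ F])
qed

section \<open>Parallel signSGD with majority vote on the canonical noise space\<close>

locale signSGD =
  fixes f :: "real^'d \<Rightarrow> real" and g :: "real^'d \<Rightarrow> real^'d" and L :: "'d \<Rightarrow> real"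
    and M :: nat and Q :: "'b measure" and G :: "real^'d \<Rightarrow> 'b \<Rightarrow> real^'d" and x0 :: "real^'d"
  assumes grad: "\<And>x. (f has_derivative (\<lambda>h. g x \<bullet> h)) (at x)"
    and L_nonneg: "\<And>i. 0 \<le> L i"
    and smooth: "\<And>x y. f y \<le> f x + g x \<bullet> (y - x) + (\<Sum>i\<in>UNIV. L i / 2 * (y $ i - x $ i)\<^sup>2)"
    and M_ge: "1 \<le> M"
    and Q: "prob_space Q"
    and G_meas: "(\<lambda>p. G (fst p) (snd p)) \<in> borel_measurable (borel \<Otimes>\<^sub>M Q)"
begin

text \<open>The iterates as functions of the array \<psi> (k, m) of all noise samples.\<close>
definition trajectory :: "(nat \<Rightarrow> real) \<Rightarrow> nat \<Rightarrow> (nat \<times> nat \<Rightarrow> 'b) \<Rightarrow> real^'d" where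
  "trajectory \<gamma> k \<psi> = ssgd G \<gamma> x0 M (\<lambda>j m \<psi>. \<psi> (j, m)) k \<psi>"

definition noise_index :: "nat \<Rightarrow> (nat \<times> nat) set" where
  "noise_index k = {..<k} \<times> {..<M}"

abbreviation noise :: "nat \<Rightarrow> (nat \<times> nat \<Rightarrow> 'b) measure" where
  "noise k \<equiv> PiM (noise_index k) (\<lambda>_. Q)"

abbreviation vote :: "real^'d \<Rightarrow> 'j set \<Rightarrow> ('j \<Rightarrow> 'b) \<Rightarrow> real^'d" where
  "vote z J \<psi> \<equiv> vsign (\<Sum>j\<in>J. vsign (G z (\<psi> j)))"

lemma trajectory_0[simp]: "trajectory \<gamma> 0 \<psi> = x0"
  by (simp add: trajectory_def)

lemma trajectory_Suc:
  "trajectory \<gamma> (Suc k) \<psi> = trajectory \<gamma> k \<psi> - \<gamma> k *\<^sub>R vote (trajectory \<gamma> k \<psi>) {..<M} (\<lambda>m. \<psi> (k, m))"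
  by (simp add: trajectory_def Let_def)

lemma trajectory_cong:
  "(\<And>j m. j < k \<Longrightarrow> m < M \<Longrightarrow> \<psi> (j, m) = \<psi>' (j, m)) \<Longrightarrow> trajectory \<gamma> k \<psi> = trajectory \<gamma> k \<psi>'"
proof (induction k)
  case (Suc k)
  then have "trajectory \<gamma> k \<psi> = trajectory \<gamma> k \<psi>'" by simp
  moreover have "(\<Sum>m<M. vsign (G z (\<psi> (k, m)))) = (\<Sum>m<M. vsign (G z (\<psi>' (k, m))))" for z
    using Suc.prems by (intro sum.cong) auto
  ultimately show ?case by (simp add: trajectory_Suc)
qed simp

lemma ssgd_eq_trajectory: "ssgd G \<gamma> x0 M xi k \<omega> = trajectory \<gamma> k (\<lambda>p. xi (fst p) (snd p) \<omega>)"
  by (induction k) (simp_all add: trajectory_Suc Let_def)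

lemma prob_space_noise: "prob_space (PiM I (\<lambda>_. Q))"
  by (rule prob_space_PiM) (use Q in auto)

lemma borel_measurable_G_at: "G z \<in> borel_measurable Q"
  using measurable_compose[OF measurable_Pair1'[of z borel Q] G_meas] by simp

lemma borel_measurable_vote[measurable]:
  assumes "finite J"
  shows "(\<lambda>\<psi>. vote z J \<psi>) \<in> borel_measurable (PiM J (\<lambda>_. Q))"
proof -
  have "(\<lambda>\<psi>. G z (\<psi> j)) \<in> borel_measurable (PiM J (\<lambda>_. Q))" if "j \<in> J" for j
    using measurable_compose[OF measurable_component_singleton[OF that] borel_measurable_G_at] by simp
  then show ?thesis using assms by measurable
qed

lemma borel_measurable_trajectory: "k \<le> n \<Longrightarrow> trajectory \<gamma> k \<in> borel_measurable (noise n)"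
proof (induction k)
  case (Suc k)
  then have IH[measurable]: "trajectory \<gamma> k \<in> borel_measurable (noise n)" by simp
  have [measurable]: "(\<lambda>\<psi>. G (trajectory \<gamma> k \<psi>) (\<psi> (k, m))) \<in> borel_measurable (noise n)"
    if "m < M" for m
  proof -
    have "(k, m) \<in> noise_index n" using Suc.prems that by (auto simp: noise_index_def)
    then have "(\<lambda>\<psi>. (trajectory \<gamma> k \<psi>, \<psi> (k, m))) \<in> measurable (noise n) (borel \<Otimes>\<^sub>M Q)"
      by (intro measurable_Pair IH measurable_component_singleton)
    from measurable_compose[OF this G_meas] show ?thesis by simp
  qed
  show ?case unfolding trajectory_Suc[abs_def] by measurable
next
  case 0
  have "trajectory \<gamma> 0 = (\<lambda>_. x0)" by auto
  then show ?case by simp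
qed

lemma trajectory_near_x0:
  assumes "k \<le> n"
  shows "\<bar>trajectory \<gamma> k \<psi> $ i - x0 $ i\<bar> \<le> (\<Sum>j<n. \<bar>\<gamma> j\<bar>)"
proof -
  have "\<bar>trajectory \<gamma> k \<psi> $ i - x0 $ i\<bar> \<le> (\<Sum>j<k. \<bar>\<gamma> j\<bar>)"
  proof (induction k)
    case (Suc k)
    have "\<bar>\<gamma> k * vote (trajectory \<gamma> k \<psi>) {..<M} (\<lambda>m. \<psi> (k, m)) $ i\<bar> \<le> \<bar>\<gamma> k\<bar>"
      using mult_left_mono[OF abs_vsign_nth_le, of "\<bar>\<gamma> k\<bar>"] by (simp add: abs_mult)
    with Suc show ?case by (simp add: trajectory_Suc)
  qed simp
  also have "\<dots> \<le> (\<Sum>j<n. \<bar>\<gamma> j\<bar>)"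
    by (rule sum_mono2) (use assms in auto)
  finally show ?thesis .
qed

lemma integrable_f_trajectory: "k \<le> n \<Longrightarrow> integrable (noise n) (\<lambda>\<psi>. f (trajectory \<gamma> k \<psi>))"
proof -
  assume kn: "k \<le> n"
  have [measurable]: "f \<in> borel_measurable borel"
    by (rule borel_measurable_continuous_onI[OF has_derivative_imp_continuous_on_UNIV[OF grad]])
  have [measurable]: "trajectory \<gamma> k \<in> borel_measurable (noise n)"
    by (rule borel_measurable_trajectory[OF kn])
  obtain B where "\<And>x. (\<forall>i. \<bar>x $ i - x0 $ i\<bar> \<le> (\<Sum>j<n. \<bar>\<gamma> j\<bar>)) \<Longrightarrow> \<bar>f x\<bar> \<le> B"
    using continuous_bounded_on_box[OF has_derivative_imp_continuous_on_UNIV[OF grad]] by blast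
  then show ?thesis
    by (intro prob_space_integrable_bounded[OF prob_space_noise, where B=B])
      (use trajectory_near_x0[OF kn] in auto)
qed

lemma rhoM_norm_eq_binomial_mean:
  "rhoM_norm M Q G g z = (\<Sum>i\<in>UNIV. binomial_mean M (spb_rho Q G g z i) (majority_sign M) * \<bar>g z $ i\<bar>)"
proof -
  interpret Q: prob_space Q by (rule Q)
  show ?thesis
    unfolding rhoM_norm_def using inc_beta_symmetric_eq_majority[OF M_ge] by (simp add: spb_rho_def)
qed

lemma borel_measurable_rhoM_norm[measurable]: "(\<lambda>z. rhoM_norm M Q G g z) \<in> borel_measurable borel"
proof -
  interpret Q: prob_space Q by (rule Q)
  have [measurable]: "g \<in> borel_measurable borel" by (rule borel_measurable_gradient[OF grad])
  have [measurable]: "(\<lambda>p. binomial_mean M p (majority_sign M)) \<in> borel_measurable borel"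
    by (rule borel_measurable_continuous_onI[OF continuous_on_binomial_mean])
  have [measurable]: "(\<lambda>z. spb_rho Q G g z i) \<in> borel_measurable borel" for i
  proof -
    let ?A = "{p \<in> space (borel \<Otimes>\<^sub>M Q). sgn (G (fst p) (snd p) $ i) = sgn (g (fst p) $ i)}"
    have [measurable]: "(\<lambda>p. G (fst p) (snd p)) \<in> borel_measurable (borel \<Otimes>\<^sub>M Q)" by (rule G_meas)
    have "?A \<in> sets (borel \<Otimes>\<^sub>M Q)" by measurable
    moreover have "spb_rho Q G g z i = enn2real (emeasure Q (Pair z -` ?A))" for z
      unfolding spb_rho_def measure_def by (simp add: space_pair_measure vimage_def)
    ultimately show ?thesis
      by (simp only:) (intro borel_measurable_enn2real Q.measurable_emeasure_Pair)
  qed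
  show ?thesis unfolding rhoM_norm_eq_binomial_mean by measurable
qed

lemma abs_rhoM_norm_le: "\<bar>rhoM_norm M Q G g z\<bar> \<le> (\<Sum>i\<in>UNIV. \<bar>g z $ i\<bar>)"
proof -
  interpret Q: prob_space Q by (rule Q)
  have "\<bar>binomial_mean M (spb_rho Q G g z i) (majority_sign M) * \<bar>g z $ i\<bar>\<bar> \<le> \<bar>g z $ i\<bar>" for i
    using abs_binomial_mean_le[of "spb_rho Q G g z i" "majority_sign M" 1 M] abs_majority_sign_le
    by (simp add: spb_rho_def abs_mult mult_left_le_one_le)
  then show ?thesis unfolding rhoM_norm_eq_binomial_mean by (intro order_trans[OF sum_abs sum_mono])
qed

lemma integrable_rhoM_trajectory:
  "k \<le> n \<Longrightarrow> integrable (noise n) (\<lambda>\<psi>. rhoM_norm M Q G g (trajectory \<gamma> k \<psi>))"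
proof -
  assume kn: "k \<le> n"
  have [measurable]: "trajectory \<gamma> k \<in> borel_measurable (noise n)"
    by (rule borel_measurable_trajectory[OF kn])
  obtain B where B: "\<And>x i. (\<forall>i. \<bar>x $ i - x0 $ i\<bar> \<le> (\<Sum>j<n. \<bar>\<gamma> j\<bar>)) \<Longrightarrow> \<bar>g x $ i\<bar> \<le> B"
    using gradient_bounded_on_box[OF has_derivative_imp_continuous_on_UNIV[OF grad] smooth] by blast
  have "\<bar>rhoM_norm M Q G g (trajectory \<gamma> k \<psi>)\<bar> \<le> real CARD('d) * B" for \<psi>
  proof -
    have "(\<Sum>i\<in>UNIV. \<bar>g (trajectory \<gamma> k \<psi>) $ i\<bar>) \<le> (\<Sum>i\<in>(UNIV::'d set). B)"
      by (rule sum_mono) (use B trajectory_near_x0[OF kn] in auto)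
    then show ?thesis using abs_rhoM_norm_le[of "trajectory \<gamma> k \<psi>"] by simp
  qed
  then show ?thesis
    by (intro prob_space_integrable_bounded[OF prob_space_noise]) auto
qed

lemma expected_one_step:
  assumes J: "finite J" "card J = M" and c: "0 \<le> c"
  shows "(\<integral>\<psi>. f (z - c *\<^sub>R vote z J \<psi>) \<partial>PiM J (\<lambda>_. Q))
         \<le> f z - c * rhoM_norm M Q G g z + c\<^sup>2 * (\<Sum>i\<in>UNIV. L i) / 2"
proof -
  let ?P = "PiM J (\<lambda>_. Q)" and ?S = "\<Sum>i\<in>UNIV. L i"
  interpret P: prob_space ?P by (rule prob_space_noise)
  have [measurable]: "f \<in> borel_measurable borel"
    by (rule borel_measurable_continuous_onI[OF has_derivative_imp_continuous_on_UNIV[OF grad]])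
  have [measurable]: "(\<lambda>\<psi>. vote z J \<psi>) \<in> borel_measurable ?P" by (rule borel_measurable_vote[OF J(1)])
  have step: "\<bar>(c *\<^sub>R vote z J \<psi>) $ i\<bar> \<le> c" for \<psi> i
    using mult_left_mono[OF abs_vsign_nth_le c] c by (simp add: abs_mult)
  obtain Bf where "\<And>x. (\<forall>i. \<bar>x $ i - z $ i\<bar> \<le> c) \<Longrightarrow> \<bar>f x\<bar> \<le> Bf"
    using continuous_bounded_on_box[OF has_derivative_imp_continuous_on_UNIV[OF grad]] by blast
  then have fint: "integrable ?P (\<lambda>\<psi>. f (z - c *\<^sub>R vote z J \<psi>))"
    by (intro prob_space_integrable_bounded[OF prob_space_noise, where B=Bf]) (use step in auto)
  have "\<bar>g z \<bullet> vote z J \<psi>\<bar> \<le> (\<Sum>i\<in>UNIV. \<bar>g z $ i\<bar>)" for \<psi>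
    unfolding inner_vec_def
    by (rule order_trans[OF sum_abs sum_mono]) (simp add: abs_mult mult_left_le[OF abs_vsign_nth_le])
  then have gint: "integrable ?P (\<lambda>\<psi>. g z \<bullet> vote z J \<psi>)"
    by (intro prob_space_integrable_bounded[OF prob_space_noise]) auto
  have "f (z - c *\<^sub>R vote z J \<psi>) \<le> f z - c * (g z \<bullet> vote z J \<psi>) + c\<^sup>2 * ?S / 2" for \<psi>
  proof -
    have "L i / 2 * ((c *\<^sub>R vote z J \<psi>) $ i)\<^sup>2 \<le> L i / 2 * c\<^sup>2" for i
      using L_nonneg[of i] step[of \<psi> i] c
      by (intro mult_left_mono) (auto simp: abs_le_square_iff[symmetric])
    then have "(\<Sum>i\<in>UNIV. L i / 2 * ((z - c *\<^sub>R vote z J \<psi>) $ i - z $ i)\<^sup>2) \<le> (\<Sum>i\<in>UNIV. L i / 2 * c\<^sup>2)"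
      by (intro sum_mono) simp
    also have "\<dots> = c\<^sup>2 * ?S / 2"
      by (simp add: sum_distrib_right[symmetric] sum_divide_distrib[symmetric])
    finally show ?thesis using smooth[of "z - c *\<^sub>R vote z J \<psi>" z] by simp
  qed
  then have "(\<integral>\<psi>. f (z - c *\<^sub>R vote z J \<psi>) \<partial>?P) \<le> (\<integral>\<psi>. f z - c * (g z \<bullet> vote z J \<psi>) + c\<^sup>2 * ?S / 2 \<partial>?P)"
    by (intro integral_mono[OF fint]) (use gint in auto)
  also have "\<dots> = f z - c * (\<integral>\<psi>. g z \<bullet> vote z J \<psi> \<partial>?P) + c\<^sup>2 * ?S / 2"
    using gint by (simp add: P.prob_space)
  also have "\<dots> \<le> f z - c * rhoM_norm M Q G g z + c\<^sup>2 * ?S / 2"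
    using rhoM_norm_le_expected_vote[where G=G and g=g and x=z, OF Q J M_ge borel_measurable_G_at] c
    by (simp add: mult_left_mono)
  finally show ?thesis .
qed

text \<open>The noise of step k is independent of the past, so Fubini reduces the descent step to
  the single-point estimate above.\<close>
lemma expected_descent_step:
  assumes \<gamma>: "0 \<le> \<gamma> k"
  shows "(\<integral>\<psi>. f (trajectory \<gamma> (Suc k) \<psi>) \<partial>noise (Suc k))
     \<le> (\<integral>\<psi>. f (trajectory \<gamma> k \<psi>) \<partial>noise k) - \<gamma> k * (\<integral>\<psi>. rhoM_norm M Q G g (trajectory \<gamma> k \<psi>) \<partial>noise k)
        + (\<gamma> k)\<^sup>2 * (\<Sum>i\<in>UNIV. L i) / 2"
proof -
  let ?I = "noise_index k" and ?J = "Pair k ` {..<M}" and ?S = "\<Sum>i\<in>UNIV. L i"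
  let ?x = "\<lambda>\<psi>. trajectory \<gamma> k \<psi>"
  let ?H = "\<lambda>x. f (?x x) - \<gamma> k * rhoM_norm M Q G g (?x x) + (\<gamma> k)\<^sup>2 * ?S / 2"
  interpret P: prob_space "noise k" by (rule prob_space_noise)
  have IJ: "?I \<inter> ?J = {}" "finite ?I" "finite ?J" and U: "noise_index (Suc k) = ?I \<union> ?J"
    by (auto simp: noise_index_def)
  have fI: "integrable (noise k) (\<lambda>\<psi>. f (?x \<psi>))" and rI: "integrable (noise k) (\<lambda>\<psi>. rhoM_norm M Q G g (?x \<psi>))"
    using integrable_f_trajectory[of k k \<gamma>] integrable_rhoM_trajectory[of k k \<gamma>] by simp_all
  have "(\<integral>y. f (trajectory \<gamma> (Suc k) (merge ?I ?J (x, y))) \<partial>PiM ?J (\<lambda>_. Q)) \<le> ?H x" for x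
  proof -
    have "?x (merge ?I ?J (x, y)) = ?x x" for y
      by (rule trajectory_cong) (use IJ in \<open>auto simp: noise_index_def\<close>)
    moreover have "(\<Sum>m<M. vsign (G z (merge ?I ?J (x, y) (k, m)))) = (\<Sum>j\<in>?J. vsign (G z (y j)))" for y z
      using IJ by (auto simp: sum.reindex inj_on_def intro!: sum.cong)
    ultimately have "trajectory \<gamma> (Suc k) (merge ?I ?J (x, y)) = ?x x - \<gamma> k *\<^sub>R vote (?x x) ?J y" for y
      by (simp add: trajectory_Suc)
    moreover have "card ?J = M" by (simp add: card_image inj_on_def)
    ultimately show ?thesis using expected_one_step[OF IJ(3) _ \<gamma>] by simp
  qed
  then have "(\<integral>\<psi>. f (trajectory \<gamma> (Suc k) \<psi>) \<partial>noise (Suc k)) \<le> (\<integral>x. ?H x \<partial>noise k)"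
    unfolding U using integrable_f_trajectory[of "Suc k" "Suc k" \<gamma>] fI rI
    by (intro integral_PiM_union_le[OF Q IJ]) (auto simp: U)
  also have "\<dots> = (\<integral>\<psi>. f (?x \<psi>) \<partial>noise k) - \<gamma> k * (\<integral>\<psi>. rhoM_norm M Q G g (?x \<psi>) \<partial>noise k)
        + (\<gamma> k)\<^sup>2 * ?S / 2"
    using fI rI by (simp add: P.prob_space)
  finally show ?thesis .
qed

lemma weighted_expected_rhoM_le:
  assumes \<gamma>: "\<And>k. 0 \<le> \<gamma> k" and lower: "\<And>x. fstar \<le> f x"
  shows "(\<Sum>k<K. \<gamma> k * (\<integral>\<psi>. rhoM_norm M Q G g (trajectory \<gamma> k \<psi>) \<partial>noise k))
      \<le> f x0 - fstar + (\<Sum>k<K. (\<gamma> k)\<^sup>2) * (\<Sum>i\<in>UNIV. L i) / 2"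
proof -
  let ?A = "\<lambda>k. \<integral>\<psi>. f (trajectory \<gamma> k \<psi>) \<partial>noise k"
  let ?N = "\<lambda>k. \<integral>\<psi>. rhoM_norm M Q G g (trajectory \<gamma> k \<psi>) \<partial>noise k"
  let ?S = "\<Sum>i\<in>UNIV. L i"
  have telescope: "?A K \<le> f x0 - (\<Sum>k<K. \<gamma> k * ?N k) + (\<Sum>k<K. (\<gamma> k)\<^sup>2) * ?S / 2" for K
  proof (induction K)
    case 0
    interpret P: prob_space "noise 0" by (rule prob_space_noise)
    show ?case by (simp add: P.prob_space)
  next
    case (Suc K)
    with expected_descent_step[of \<gamma> K, OF \<gamma>] show ?case
      by (simp add: algebra_simps add_divide_distrib)
  qed
  interpret P: prob_space "noise K" by (rule prob_space_noise)
  have "fstar \<le> ?A K"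
    using integral_mono[OF _ integrable_f_trajectory[of K K \<gamma>], of "\<lambda>_. fstar"] lower
    by (simp add: P.prob_space)
  with telescope[of K] show ?thesis by simp
qed

text \<open>Fresh iid draws turn the expectation over P into an integral over the canonical product space.\<close>
lemma expectation_ssgd_eq_integral_noise:
  assumes P: "prob_space P"
    and indep: "prob_space.indep_vars P (\<lambda>_. Q) (\<lambda>(k, m). xi k m) (UNIV \<times> {..<M})"
    and ident: "\<And>k m. m < M \<Longrightarrow> distr P Q (xi k m) = Q"
  shows "prob_space.expectation P (\<lambda>\<omega>. rhoM_norm M Q G g (ssgd G \<gamma> x0 M xi k \<omega>))
       = (\<integral>\<psi>. rhoM_norm M Q G g (trajectory \<gamma> k \<psi>) \<partial>noise k)"
proof (cases k)
  case 0
  interpret P: prob_space P by (rule P)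
  interpret P0: prob_space "noise 0" by (rule prob_space_noise)
  show ?thesis using 0 by (simp add: P.prob_space P0.prob_space)
next
  case (Suc k')
  interpret P: prob_space P by (rule P)
  let ?X = "\<lambda>(k, m). xi k m" and ?Y = "\<lambda>\<omega>. \<lambda>i\<in>noise_index k. (\<lambda>(k, m). xi k m) i \<omega>"
  have ne: "noise_index k \<noteq> {}" using Suc M_ge by (auto simp: noise_index_def lessThan_empty_iff)
  have sub: "noise_index k \<subseteq> UNIV \<times> {..<M}" by (auto simp: noise_index_def)
  have rv: "?X i \<in> measurable P Q" if "i \<in> noise_index k" for i
    using indep that sub unfolding P.indep_vars_def by (cases i) auto
  have Ym: "?Y \<in> measurable P (noise k)"
    by (rule measurable_restrict) (use rv in auto)
  have "distr P (noise k) ?Y = PiM (noise_index k) (\<lambda>i. distr P Q (?X i))"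
    using P.indep_vars_iff_distr_eq_PiM'[OF ne rv] P.indep_vars_subset[OF indep sub] by simp
  also have "\<dots> = noise k"
    by (rule PiM_cong) (auto simp: noise_index_def ident)
  finally have D: "distr P (noise k) ?Y = noise k" .
  have [measurable]: "(\<lambda>\<psi>. rhoM_norm M Q G g (trajectory \<gamma> k \<psi>)) \<in> borel_measurable (noise k)"
    using borel_measurable_trajectory[of k k \<gamma>] by measurable
  have "ssgd G \<gamma> x0 M xi k \<omega> = trajectory \<gamma> k (?Y \<omega>)" for \<omega>
    unfolding ssgd_eq_trajectory by (rule trajectory_cong) (auto simp: noise_index_def)
  then show ?thesis
    using integral_distr[OF Ym, of "\<lambda>\<psi>. rhoM_norm M Q G g (trajectory \<gamma> k \<psi>)"] D by simp
qed

end

section \<open>Rates for the two step-size schedules\<close>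

lemma Min_le_of_weighted_sum_le:
  fixes E \<gamma> :: "nat \<Rightarrow> real"
  assumes K: "0 < K" and \<gamma>: "\<And>k. 0 \<le> \<gamma> k" and sum: "(\<Sum>k<K. \<gamma> k * E k) \<le> B"
    and W: "0 < W" "W \<le> (\<Sum>k<K. \<gamma> k)" and B: "0 \<le> B"
  shows "Min (E ` {..<K}) \<le> B / W"
proof (cases "Min (E ` {..<K}) \<le> 0")
  case False
  let ?m = "Min (E ` {..<K})"
  have "?m * W \<le> ?m * (\<Sum>k<K. \<gamma> k)" using False W by (intro mult_left_mono) auto
  also have "\<dots> = (\<Sum>k<K. \<gamma> k * ?m)" unfolding sum_distrib_left by (simp add: mult.commute)
  also have "\<dots> \<le> (\<Sum>k<K. \<gamma> k * E k)"
    using K \<gamma> by (intro sum_mono mult_left_mono Min_le) auto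
  finally show ?thesis using sum W by (simp add: pos_le_divide_eq)
next
  case True
  moreover have "0 \<le> B / W" using B W by simp
  ultimately show ?thesis by linarith
qed

lemma sqrt_le_sum_inverse_sqrt: "sqrt (real K) \<le> (\<Sum>k<K. 1 / sqrt (real k + 1))"
proof -
  have "sqrt (real K) = (\<Sum>k<K. 1 / sqrt (real K))"
    by (cases "K = 0") (simp_all add: real_div_sqrt)
  also have "\<dots> \<le> (\<Sum>k<K. 1 / sqrt (real k + 1))"
    by (intro sum_mono divide_left_mono) auto
  finally show ?thesis .
qed

lemma harm_le_three_ln:
  assumes "2 \<le> K"
  shows "harm K \<le> 3 * ln (real K)"
proof -
  obtain n where n: "K = Suc n" using assms by (cases K) auto
  have "harm (Suc n) - ln (real (Suc n)) \<le> harm (Suc 0) - ln (real (Suc 0))"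
    using decseq_harm_diff_ln[unfolded decseq_def, rule_format, of 0 n] by simp
  then have "harm K \<le> 1 + ln (real K)" using n by (simp add: harm_altdef)
  moreover have "ln 2 \<le> ln (real K)" using assms by simp
  ultimately show ?thesis using ln2_ge_two_thirds by simp
qed

lemma decreasing_step_rate:
  fixes E :: "nat \<Rightarrow> real"
  assumes bound: "(\<Sum>k<K. \<gamma>0 / sqrt (real k + 1) * E k) \<le> C + (\<Sum>k<K. (\<gamma>0 / sqrt (real k + 1))\<^sup>2) * S / 2"
    and C: "0 \<le> C" and S: "0 \<le> S" and \<gamma>0: "0 < \<gamma>0" and K: "2 \<le> K"
  shows "Min (E ` {..<K}) \<le> C / (\<gamma>0 * sqrt (real K)) + 3 * \<gamma>0 * S / 2 * (ln (real K) / sqrt (real K))"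
proof -
  have "(\<gamma>0 / sqrt (real k + 1))\<^sup>2 = \<gamma>0\<^sup>2 * inverse (real (Suc k))" for k
  proof -
    have "(\<gamma>0 / sqrt (real k + 1))\<^sup>2 = \<gamma>0\<^sup>2 / (sqrt (real k + 1))\<^sup>2" by (rule power_divide)
    then show ?thesis by (simp add: divide_inverse)
  qed
  then have "(\<Sum>k<K. (\<gamma>0 / sqrt (real k + 1))\<^sup>2) = \<gamma>0\<^sup>2 * harm K"
    by (simp add: harm_altdef sum_distrib_left)
  with bound have weighted: "(\<Sum>k<K. \<gamma>0 / sqrt (real k + 1) * E k) \<le> C + \<gamma>0\<^sup>2 * harm K * S / 2"
    by simp
  have W: "\<gamma>0 * sqrt (real K) \<le> (\<Sum>k<K. \<gamma>0 / sqrt (real k + 1))"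
    using mult_left_mono[OF sqrt_le_sum_inverse_sqrt[of K], of \<gamma>0] \<gamma>0 by (simp add: sum_distrib_left)
  have "0 \<le> \<gamma>0\<^sup>2 * harm K * S / 2" using S harm_nonneg[of K] by (intro divide_nonneg_pos mult_nonneg_nonneg) auto
  then have "Min (E ` {..<K}) \<le> (C + \<gamma>0\<^sup>2 * harm K * S / 2) / (\<gamma>0 * sqrt (real K))"
    using K \<gamma>0 C by (intro Min_le_of_weighted_sum_le[OF _ _ weighted _ W]) simp_all
  also have "\<dots> = C / (\<gamma>0 * sqrt (real K)) + \<gamma>0 * S / 2 * (harm K / sqrt (real K))"
    using \<gamma>0 by (simp add: add_divide_distrib power2_eq_square)
  also have "\<dots> \<le> C / (\<gamma>0 * sqrt (real K)) + \<gamma>0 * S / 2 * (3 * ln (real K) / sqrt (real K))"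
    using harm_le_three_ln[OF K] \<gamma>0 S by (intro add_left_mono mult_left_mono divide_right_mono) auto
  finally show ?thesis by simp
qed

lemma constant_step_rate:
  fixes E :: "nat \<Rightarrow> real"
  assumes bound: "(\<Sum>k<K. \<gamma> * E k) \<le> C + (\<Sum>k<K. \<gamma>\<^sup>2) * S / 2"
    and \<gamma>: "0 < \<gamma>" and K: "1 \<le> K"
  shows "(1 / real K) * (\<Sum>k<K. E k) \<le> C / (\<gamma> * real K) + \<gamma> * S / 2"
proof -
  have "\<gamma> * (\<Sum>k<K. E k) \<le> C + real K * \<gamma>\<^sup>2 * S / 2"
    using bound by (simp add: sum_distrib_left)
  have "(1 / real K) * (\<Sum>k<K. E k) = (\<gamma> * (\<Sum>k<K. E k)) / (\<gamma> * real K)"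
    using \<gamma> by simp
  also have "\<dots> \<le> (C + real K * \<gamma>\<^sup>2 * S / 2) / (\<gamma> * real K)"
    using \<open>\<gamma> * (\<Sum>k<K. E k) \<le> _\<close> \<gamma> K by (intro divide_right_mono) auto
  also have "\<dots> = C / (\<gamma> * real K) + \<gamma> * S / 2"
    using \<gamma> K by (simp add: add_divide_distrib power2_eq_square)
  finally show ?thesis .
qed

theorem theorem3:
  fixes f :: "real^'d \<Rightarrow> real" and g :: "real^'d \<Rightarrow> real^'d"
    and fstar :: real and L :: "'d \<Rightarrow> real" and M :: nat
    and P :: "'a measure" and Q :: "'b measure"
    and G :: "real^'d \<Rightarrow> 'b \<Rightarrow> real^'d"
    and xi :: "nat \<Rightarrow> nat \<Rightarrow> 'a \<Rightarrow> 'b" and x0 :: "real^'d"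
  assumes grad: "\<And>x. (f has_derivative (\<lambda>h. g x \<bullet> h)) (at x)"
    and lower: "\<And>x. fstar \<le> f x"
    and L_nonneg: "\<And>i. 0 \<le> L i"
    and smooth: "\<And>x y. f y \<le> f x + g x \<bullet> (y - x) + (\<Sum>i\<in>UNIV. L i / 2 * (y $ i - x $ i)\<^sup>2)"
    and M_ge: "1 \<le> M"
    and P: "prob_space P"
    and G_meas: "(\<lambda>p. G (fst p) (snd p)) \<in> borel_measurable (borel \<Otimes>\<^sub>M Q)"
    and indep: "prob_space.indep_vars P (\<lambda>_. Q) (\<lambda>(k, m). xi k m) (UNIV \<times> {..<M})"
    and ident: "\<And>k m. m < M \<Longrightarrow> distr P Q (xi k m) = Q"
    and SPB: "\<And>x i. g x $ i \<noteq> 0 \<Longrightarrow> spb_rho Q G g x i > 1 / 2"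
  shows "(\<forall>\<gamma>0 > 0. \<forall>K \<ge> 2.
            Min ((\<lambda>k. prob_space.expectation P
                   (\<lambda>\<omega>. rhoM_norm M Q G g (ssgd G (\<lambda>j. \<gamma>0 / sqrt (real j + 1)) x0 M xi k \<omega>))) ` {..<K})
            \<le> (f x0 - fstar) / (\<gamma>0 * sqrt (real K))
              + 3 * \<gamma>0 * real CARD('d) * ((\<Sum>i\<in>UNIV. L i) / real CARD('d)) / 2
                * (ln (real K) / sqrt (real K)))
       \<and> (\<forall>\<gamma> > 0. \<forall>K \<ge> 1.
            (1 / real K) * (\<Sum>k<K. prob_space.expectation P
                   (\<lambda>\<omega>. rhoM_norm M Q G g (ssgd G (\<lambda>_. \<gamma>) x0 M xi k \<omega>)))
            \<le> (f x0 - fstar) / (\<gamma> * real K)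
              + \<gamma> * real CARD('d) * ((\<Sum>i\<in>UNIV. L i) / real CARD('d)) / 2)"
proof -
  interpret P: prob_space P by (rule P)
  have "xi 0 0 \<in> measurable P Q"
    using indep M_ge unfolding P.indep_vars_def by fastforce
  then have Q: "prob_space Q"
    using P.prob_space_distr ident[OF M_ge[unfolded One_nat_def Suc_le_eq]] by metis
  interpret signSGD f g L M Q G x0
    by (rule signSGD.intro[OF grad L_nonneg smooth M_ge Q G_meas])
  let ?E = "\<lambda>\<gamma> k. prob_space.expectation P (\<lambda>\<omega>. rhoM_norm M Q G g (ssgd G \<gamma> x0 M xi k \<omega>))"
  have bound: "(\<Sum>k<K. \<gamma> k * ?E \<gamma> k) \<le> f x0 - fstar + (\<Sum>k<K. (\<gamma> k)\<^sup>2) * (\<Sum>i\<in>UNIV. L i) / 2"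
    if "\<And>k. 0 \<le> \<gamma> k" for \<gamma> K
    using weighted_expected_rhoM_le[OF that lower]
    by (simp only: expectation_ssgd_eq_integral_noise[OF P indep ident])
  have C: "0 \<le> f x0 - fstar" using lower[of x0] by simp
  have S: "0 \<le> (\<Sum>i\<in>UNIV. L i)" by (intro sum_nonneg L_nonneg)
  have avg: "real CARD('d) * ((\<Sum>i\<in>UNIV. L i) / real CARD('d)) = (\<Sum>i\<in>UNIV. L i)" by simp
  show ?thesis
  proof (intro conjI allI impI)
    fix \<gamma>0 :: real and K :: nat assume \<gamma>0: "0 < \<gamma>0" and K: "2 \<le> K"
    have "(\<Sum>k<K. \<gamma>0 / sqrt (real k + 1) * ?E (\<lambda>j. \<gamma>0 / sqrt (real j + 1)) k)
        \<le> f x0 - fstar + (\<Sum>k<K. (\<gamma>0 / sqrt (real k + 1))\<^sup>2) * (\<Sum>i\<in>UNIV. L i) / 2"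
      by (rule bound) (use \<gamma>0 in simp)
    from decreasing_step_rate[OF this C S \<gamma>0 K]
    show "Min ((\<lambda>k. ?E (\<lambda>j. \<gamma>0 / sqrt (real j + 1)) k) ` {..<K})
      \<le> (f x0 - fstar) / (\<gamma>0 * sqrt (real K))
         + 3 * \<gamma>0 * real CARD('d) * ((\<Sum>i\<in>UNIV. L i) / real CARD('d)) / 2 * (ln (real K) / sqrt (real K))"
      using avg by (simp add: mult.assoc)
  next
    fix \<gamma> :: real and K :: nat assume \<gamma>: "0 < \<gamma>" and K: "1 \<le> K"
    have "(\<Sum>k<K. \<gamma> * ?E (\<lambda>_. \<gamma>) k) \<le> f x0 - fstar + (\<Sum>k<K. \<gamma>\<^sup>2) * (\<Sum>i\<in>UNIV. L i) / 2"
      by (rule bound) (use \<gamma> in simp)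
    from constant_step_rate[OF this \<gamma> K]
    show "1 / real K * (\<Sum>k<K. ?E (\<lambda>_. \<gamma>) k)
      \<le> (f x0 - fstar) / (\<gamma> * real K) + \<gamma> * real CARD('d) * ((\<Sum>i\<in>UNIV. L i) / real CARD('d)) / 2"
      using avg by (simp add: mult.assoc)
  qed
qed

end
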